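(* Let $M^4$ be a smooth $4$-manifold, $\sigma$ a smooth non-constant function on $M^4$ with $\sigma_i:=\partial\sigma/\partial x^i$, $\sigma_{ij}:=\partial^2\sigma/\partial x^i\partial x^j$, and $h_{11}(t)>0$ a Riemannian metric on $\mathbb{R}$. On the domain of $J^{1*}(\mathbb{R},M^4)$ where $\mathcal{P}^{1111}:=p^1_1p^1_2p^1_3p^1_4>0$, consider $\overset{*}{H}=4e^{-2\sigma(x)}h_{11}(t)[\mathcal{P}^{1111}]^{1/2}$ and its Cartan canonical connection with components $H^i_{jk}=4\delta^i_j\delta^i_k\sigma_i$, $C^{j(k)}_{i(1)}=\mathsf{C}^{jk}_i\frac{p^1_i}{p^1_jp^1_k}$ (no sums), $\mathsf{C}^{jk}_i=\frac{1-2\delta^{jk}-2\delta^j_i-2\delta^k_i+8\delta^j_i\delta^k_i}{8}$. Then the Ricci d-tensors $$R_{ij}:=\frac{\delta H^m_{ij}}{\delta x^m}-\frac{\delta H^m_{im}}{\delta x^j}+H^r_{ij}H^m_{rm}-H^r_{im}H^m_{rj}+C^{m(r)}_{i(1)}R^{(1)}_{(r)jm},\qquad S^{(i)(j)}_{(1)(1)}:=\frac{\partial C^{i(j)}_{m(1)}}{\partial p^1_m}-\frac{\partial C^{i(m)}_{m(1)}}{\partial p^1_j}+C^{r(j)}_{m(1)}C^{i(m)}_{r(1)}-C^{r(m)}_{m(1)}C^{i(j)}_{r(1)}$$ (summation over $m,r$) are given by (no sums over $i,j,k,l$) $$R_{ij}=\begin{cases}-2\sigma_{ij}-\dfrac{p^1_i}{p^1_k}\sigma_{jk}-\dfrac{p^1_i}{p^1_l}\sigma_{jl},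 & i\neq j,\ \{i,j,k,l\}=\{1,2,3,4\},\\[2mm] 0,& i=j,\end{cases}\qquad R^{(i)(j)}_{(1)(1)}=-S^{(i)(j)}_{(1)(1)}=\frac{4\delta^{ij}-1}{8}\frac{1}{p^1_ip^1_j}.$$
   Context: The nonlinear connection is $\underset{2}{N}{}^{(1)}_{(i)j}=-4\sigma_ip^1_i\delta_{ij}$ (no sum), with adapted vector fields $\frac{\delta}{\delta x^i}=\frac{\partial}{\partial x^i}+4\sigma_ip^1_i\frac{\partial}{\partial p^1_i}$ (no sum over $i$). The torsion d-tensor is $R^{(1)}_{(r)ij}=\frac{\delta \underset{2}{N}{}^{(1)}_{(r)i}}{\delta x^j}-\frac{\delta \underset{2}{N}{}^{(1)}_{(r)j}}{\delta x^i}$. Here $R^{(i)(j)}_{(1)(1)}$ denotes the vertical Ricci d-tensor of the Cartan canonical connection, which equals $-S^{(i)(j)}_{(1)(1)}$. *)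

theory Defs
  imports "HOL-Analysis.Analysis"
begin

text \<open>Coordinates: a chart of M^4 is an open set U of real^4; fibre coordinates
  p = (p^1_1,...,p^1_4) are a vector in real^4. Indices range over the type 4.\<close>

definition kd :: "'n \<Rightarrow> 'n \<Rightarrow> real" where
  "kd i j = (if i = j then 1 else 0)"

definition pd :: "(real^'n \<Rightarrow> real) \<Rightarrow> 'n \<Rightarrow> real^'n \<Rightarrow> real" where
  "pd f i x = deriv (\<lambda>t. f (x + t *\<^sub>R axis i 1)) 0"

fun pder :: "'n list \<Rightarrow> (real^'n \<Rightarrow> real) \<Rightarrow> real^'n \<Rightarrow> real" where
  "pder [] f = f"
| "pder (i # is) f = pd (pder is f) i"

definition smooth_on_set :: "(real^'n \<Rightarrow> real) \<Rightarrow> (real^'n) set \<Rightarrow> bool" where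
  "smooth_on_set f U \<longleftrightarrow> (\<forall>is. continuous_on U (pder is f) \<and>
     (\<forall>i. \<forall>x\<in>U. (\<lambda>t. pder is f (x + t *\<^sub>R axis i 1)) differentiable (at 0)))"

definition Hc :: "(real^4 \<Rightarrow> real) \<Rightarrow> 4 \<Rightarrow> 4 \<Rightarrow> 4 \<Rightarrow> real^4 \<Rightarrow> real" where
  "Hc \<sigma> i j k x = 4 * kd i j * kd i k * pd \<sigma> i x"

definition Ck :: "4 \<Rightarrow> 4 \<Rightarrow> 4 \<Rightarrow> real" where
  "Ck i j k = (1 - 2 * kd j k - 2 * kd j i - 2 * kd k i + 8 * kd j i * kd k i) / 8"

definition Cc :: "4 \<Rightarrow> 4 \<Rightarrow> 4 \<Rightarrow> real^4 \<Rightarrow> real" where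
  "Cc i j k p = Ck i j k * p$i / (p$j * p$k)"

text \<open>Nonlinear connection N^{(1)}_{(i)j} = -4 sigma_i p^1_i delta_{ij}.\<close>
definition Nc :: "(real^4 \<Rightarrow> real) \<Rightarrow> 4 \<Rightarrow> 4 \<Rightarrow> real^4 \<Rightarrow> real^4 \<Rightarrow> real" where
  "Nc \<sigma> i j x p = - 4 * pd \<sigma> i x * p$i * kd i j"

text \<open>Adapted derivative delta/delta x^m = d/dx^m + 4 sigma_m p^1_m d/dp^1_m,
  applied to a function F(x,p).\<close>
definition deltax :: "(real^4 \<Rightarrow> real) \<Rightarrow> (real^4 \<Rightarrow> real^4 \<Rightarrow> real) \<Rightarrow> 4 \<Rightarrow> real^4 \<Rightarrow> real^4 \<Rightarrow> real" where
  "deltax \<sigma> F m x p = pd (\<lambda>y. F y p) m x + 4 * pd \<sigma> m x * p$m * pd (\<lambda>q. F x q) m p"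

definition Rtor :: "(real^4 \<Rightarrow> real) \<Rightarrow> 4 \<Rightarrow> 4 \<Rightarrow> 4 \<Rightarrow> real^4 \<Rightarrow> real^4 \<Rightarrow> real" where
  "Rtor \<sigma> r i j x p = deltax \<sigma> (Nc \<sigma> r i) j x p - deltax \<sigma> (Nc \<sigma> r j) i x p"

definition Ric :: "(real^4 \<Rightarrow> real) \<Rightarrow> 4 \<Rightarrow> 4 \<Rightarrow> real^4 \<Rightarrow> real^4 \<Rightarrow> real" where
  "Ric \<sigma> i j x p =
     (\<Sum>m\<in>UNIV. deltax \<sigma> (\<lambda>y q. Hc \<sigma> m i j y) m x p)
   - (\<Sum>m\<in>UNIV. deltax \<sigma> (\<lambda>y q. Hc \<sigma> m i m y) j x p)
   + (\<Sum>r\<in>UNIV. \<Sum>m\<in>UNIV. Hc \<sigma> r i j x * Hc \<sigma> m r m x - Hc \<sigma> r i m x * Hc \<sigma> m r j x)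
   + (\<Sum>m\<in>UNIV. \<Sum>r\<in>UNIV. Cc i m r p * Rtor \<sigma> r j m x p)"

definition Sv :: "4 \<Rightarrow> 4 \<Rightarrow> real^4 \<Rightarrow> real" where
  "Sv i j p =
     (\<Sum>m\<in>UNIV. pd (Cc m i j) m p - pd (Cc m i m) j p)
   + (\<Sum>m\<in>UNIV. \<Sum>r\<in>UNIV. Cc m r j p * Cc r i m p - Cc m r m p * Cc r i j p)"

definition Rv :: "4 \<Rightarrow> 4 \<Rightarrow> real^4 \<Rightarrow> real" where
  "Rv i j p = - Sv i j p"

end

theory Submission
  imports Defs
begin

text \<open>All Christoffel symbols are built from first derivatives of \<sigma> and from the fibre
  coordinates, so both Ricci d-tensors reduce to finite Kronecker-delta sums. The only analytic
  input is the symmetry of second partial derivatives of the smooth function \<sigma> (Clairaut),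
  proved here from the mean value theorem applied twice to a second difference quotient. The
  horizontal tensor collapses to second derivatives of \<sigma> weighted by differences of the
  constants C^{jk}_i, which vanish on the diagonal; the vertical tensor only involves the rational
  functions C^{j(k)}_{i(1)} of p and is evaluated case by case.\<close>

lemma pder_line_has_derivative_0:
  assumes "smooth_on_set f U" "y \<in> U"
  shows "((\<lambda>t. pder is f (y + t *\<^sub>R axis i 1)) has_real_derivative pd (pder is f) i y) (at 0)"
proof -
  have "(\<lambda>t. pder is f (y + t *\<^sub>R axis i 1)) differentiable (at 0)"
    using assms unfolding smooth_on_set_def by blast
  then show ?thesis unfolding pd_def using DERIV_deriv_iff_real_differentiable by blast
qed

lemma pder_line_has_derivative:
  assumes sm: "smooth_on_set f U" and inU: "x + t0 *\<^sub>R axis i 1 \<in> U"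
  shows "((\<lambda>t. pder is f (x + t *\<^sub>R axis i 1)) has_real_derivative
            pd (pder is f) i (x + t0 *\<^sub>R axis i 1)) (at t0)"
proof -
  define g where "g = (\<lambda>t. pder is f (x + t *\<^sub>R axis i 1))"
  have "(\<lambda>u. pder is f ((x + t0 *\<^sub>R axis i 1) + u *\<^sub>R axis i 1)) = (\<lambda>u. g (u + t0))"
    by (simp add: g_def algebra_simps scaleR_add_left)
  then have "((\<lambda>u. g (u + t0)) has_real_derivative pd (pder is f) i (x + t0 *\<^sub>R axis i 1)) (at 0)"
    using pder_line_has_derivative_0[OF sm inU, of "is" i] by simp
  then have "(g has_real_derivative pd (pder is f) i (x + t0 *\<^sub>R axis i 1)) (at (0 + t0))"
    using DERIV_shift by blast
  then show ?thesis by (simp add: g_def)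
qed

lemma second_difference_mean_value:
  fixes f :: "real^'n \<Rightarrow> real"
  assumes sm: "smooth_on_set f U" and h: "0 < h"
    and box: "\<And>s t. 0 \<le> s \<Longrightarrow> s \<le> h \<Longrightarrow> 0 \<le> t \<Longrightarrow> t \<le> h \<Longrightarrow>
                 x + s *\<^sub>R axis c 1 + t *\<^sub>R axis d 1 \<in> U"
  shows "\<exists>\<xi> \<eta>. 0 < \<xi> \<and> \<xi> < h \<and> 0 < \<eta> \<and> \<eta> < h \<and>
     f (x + h *\<^sub>R axis c 1 + h *\<^sub>R axis d 1) - f (x + h *\<^sub>R axis c 1) - f (x + h *\<^sub>R axis d 1) + f x
       = h * h * pd (pd f c) d (x + \<xi> *\<^sub>R axis c 1 + \<eta> *\<^sub>R axis d 1)"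
proof -
  define \<phi> where "\<phi> = (\<lambda>s. f (x + h *\<^sub>R axis d 1 + s *\<^sub>R axis c 1) - f (x + s *\<^sub>R axis c 1))"
  have d\<phi>: "DERIV \<phi> s :> pd f c (x + h *\<^sub>R axis d 1 + s *\<^sub>R axis c 1) - pd f c (x + s *\<^sub>R axis c 1)"
    if "0 \<le> s" "s \<le> h" for s
  proof -
    have far: "((\<lambda>t. pder [] f ((x + h *\<^sub>R axis d 1) + t *\<^sub>R axis c 1)) has_real_derivative
               pd (pder [] f) c ((x + h *\<^sub>R axis d 1) + s *\<^sub>R axis c 1)) (at s)"
      by (rule pder_line_has_derivative[OF sm]) (use box[of s h] that h in \<open>simp add: algebra_simps\<close>)
    have near: "((\<lambda>t. pder [] f (x + t *\<^sub>R axis c 1)) has_real_derivative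
               pd (pder [] f) c (x + s *\<^sub>R axis c 1)) (at s)"
      by (rule pder_line_has_derivative[OF sm]) (use box[of s 0] that h in \<open>simp add: algebra_simps\<close>)
    show ?thesis using DERIV_diff[OF far near] by (simp add: \<phi>_def)
  qed
  obtain \<xi> where \<xi>: "0 < \<xi>" "\<xi> < h"
    "\<phi> h - \<phi> 0 = (h - 0) * (pd f c (x + h *\<^sub>R axis d 1 + \<xi> *\<^sub>R axis c 1) - pd f c (x + \<xi> *\<^sub>R axis c 1))"
    using MVT2[OF h d\<phi>] by blast
  define \<psi> where "\<psi> = (\<lambda>t. pd f c (x + \<xi> *\<^sub>R axis c 1 + t *\<^sub>R axis d 1))"
  have d\<psi>: "DERIV \<psi> t :> pd (pd f c) d (x + \<xi> *\<^sub>R axis c 1 + t *\<^sub>R axis d 1)"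
    if "0 \<le> t" "t \<le> h" for t
  proof -
    have "((\<lambda>u. pder [c] f ((x + \<xi> *\<^sub>R axis c 1) + u *\<^sub>R axis d 1)) has_real_derivative
               pd (pder [c] f) d ((x + \<xi> *\<^sub>R axis c 1) + t *\<^sub>R axis d 1)) (at t)"
      by (rule pder_line_has_derivative[OF sm]) (use box[of \<xi> t] that \<xi> in \<open>simp add: algebra_simps\<close>)
    then show ?thesis by (simp add: \<psi>_def)
  qed
  obtain \<eta> where \<eta>: "0 < \<eta>" "\<eta> < h"
    "\<psi> h - \<psi> 0 = (h - 0) * pd (pd f c) d (x + \<xi> *\<^sub>R axis c 1 + \<eta> *\<^sub>R axis d 1)"
    using MVT2[OF h d\<psi>] by blast
  have "f (x + h *\<^sub>R axis c 1 + h *\<^sub>R axis d 1) - f (x + h *\<^sub>R axis c 1) - f (x + h *\<^sub>R axis d 1) + f x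
      = \<phi> h - \<phi> 0"
    by (simp add: \<phi>_def add_ac)
  also have "\<dots> = h * (\<psi> h - \<psi> 0)" using \<xi>(3) by (simp add: \<psi>_def add_ac)
  also have "\<dots> = h * h * pd (pd f c) d (x + \<xi> *\<^sub>R axis c 1 + \<eta> *\<^sub>R axis d 1)" using \<eta>(3) by simp
  finally show ?thesis using \<xi> \<eta> by blast
qed

lemma dist_add_axis_le:
  fixes x :: "real^'n"
  assumes "0 \<le> s" "0 \<le> t"
  shows "dist (x + s *\<^sub>R axis c 1 + t *\<^sub>R axis e 1) x \<le> s + t"
proof -
  have "dist (x + s *\<^sub>R axis c 1 + t *\<^sub>R axis e 1) x = norm (s *\<^sub>R axis c (1::real) + t *\<^sub>R axis e 1)"
    by (simp add: dist_norm)
  also have "\<dots> \<le> norm (s *\<^sub>R axis c (1::real)) + norm (t *\<^sub>R axis e (1::real))"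
    by (rule norm_triangle_ineq)
  finally show ?thesis using assms by simp
qed

text \<open>Both orders of differentiation equal the same second difference quotient up to a mean
  value point, and continuity of the second derivatives lets these points tend to x.\<close>

lemma pd_pd_commute:
  fixes f :: "real^'n \<Rightarrow> real"
  assumes U: "open U" and sm: "smooth_on_set f U" and x: "x \<in> U"
  shows "pd (pd f a) b x = pd (pd f b) a x"
proof (rule ccontr)
  let ?A = "pd (pd f a) b" and ?B = "pd (pd f b) a"
  assume ne: "?A x \<noteq> ?B x"
  define \<epsilon> where "\<epsilon> = \<bar>?A x - ?B x\<bar> / 2"
  have \<epsilon>: "\<epsilon> > 0" using ne by (simp add: \<epsilon>_def)
  have "continuous_on U (pder [b, a] f)" "continuous_on U (pder [a, b] f)"
    using sm unfolding smooth_on_set_def by blast+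
  then have cA: "isCont ?A x" and cB: "isCont ?B x"
    using continuous_on_eq_continuous_at[OF U] x by auto
  obtain d1 where d1: "d1 > 0" "\<And>y. dist y x < d1 \<Longrightarrow> dist (?A y) (?A x) < \<epsilon>"
    using cA \<epsilon> unfolding continuous_at_eps_delta by blast
  obtain d2 where d2: "d2 > 0" "\<And>y. dist y x < d2 \<Longrightarrow> dist (?B y) (?B x) < \<epsilon>"
    using cB \<epsilon> unfolding continuous_at_eps_delta by blast
  obtain r where r: "r > 0" "ball x r \<subseteq> U" using U x open_contains_ball by blast
  define h where "h = min r (min d1 d2) / 3"
  have h: "h > 0" and small: "2 * h < r" "2 * h < d1" "2 * h < d2"
    using r d1 d2 by (simp_all add: h_def)
  have near: "dist (x + s *\<^sub>R axis c 1 + t *\<^sub>R axis e 1) x < min r (min d1 d2)"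
    if "0 \<le> s" "s \<le> h" "0 \<le> t" "t \<le> h" for s t and c e :: 'n
    using dist_add_axis_le[of s t x c e] that small by linarith
  have box: "x + s *\<^sub>R axis c 1 + t *\<^sub>R axis e 1 \<in> U"
    if "0 \<le> s" "s \<le> h" "0 \<le> t" "t \<le> h" for s t and c e :: 'n
    using near[OF that, of c e] r(2) by (auto simp: dist_commute)
  obtain \<xi> \<eta> where ab: "0 < \<xi>" "\<xi> < h" "0 < \<eta>" "\<eta> < h"
     "f (x + h *\<^sub>R axis a 1 + h *\<^sub>R axis b 1) - f (x + h *\<^sub>R axis a 1) - f (x + h *\<^sub>R axis b 1) + f x
       = h * h * ?A (x + \<xi> *\<^sub>R axis a 1 + \<eta> *\<^sub>R axis b 1)"
    using second_difference_mean_value[OF sm h box] by blast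
  obtain \<xi>' \<eta>' where ba: "0 < \<xi>'" "\<xi>' < h" "0 < \<eta>'" "\<eta>' < h"
     "f (x + h *\<^sub>R axis b 1 + h *\<^sub>R axis a 1) - f (x + h *\<^sub>R axis b 1) - f (x + h *\<^sub>R axis a 1) + f x
       = h * h * ?B (x + \<xi>' *\<^sub>R axis b 1 + \<eta>' *\<^sub>R axis a 1)"
    using second_difference_mean_value[OF sm h box] by blast
  have "f (x + h *\<^sub>R axis b 1 + h *\<^sub>R axis a 1) = f (x + h *\<^sub>R axis a 1 + h *\<^sub>R axis b 1)"
    by (simp add: add_ac)
  then have "h * h * ?A (x + \<xi> *\<^sub>R axis a 1 + \<eta> *\<^sub>R axis b 1)
      = h * h * ?B (x + \<xi>' *\<^sub>R axis b 1 + \<eta>' *\<^sub>R axis a 1)"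
    using ab(5) ba(5) by linarith
  then have eq: "?A (x + \<xi> *\<^sub>R axis a 1 + \<eta> *\<^sub>R axis b 1) = ?B (x + \<xi>' *\<^sub>R axis b 1 + \<eta>' *\<^sub>R axis a 1)"
    using h by simp
  have "dist (?A (x + \<xi> *\<^sub>R axis a 1 + \<eta> *\<^sub>R axis b 1)) (?A x) < \<epsilon>"
       "dist (?B (x + \<xi>' *\<^sub>R axis b 1 + \<eta>' *\<^sub>R axis a 1)) (?B x) < \<epsilon>"
    using d1(2) d2(2) near[of \<xi> \<eta> a b] near[of \<xi>' \<eta>' b a] ab ba by force+
  then have "\<bar>?A x - ?B x\<bar> < 2 * \<epsilon>" using eq by (simp add: dist_real_def)
  then show False by (simp add: \<epsilon>_def)
qed

lemma vec_nth_add_axis: "(p + t *\<^sub>R axis m 1) $ a = p$a + t * kd a m"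
  by (simp add: axis_def kd_def)

lemma pd_const: "pd (\<lambda>y. c) i x = 0"
  unfolding pd_def by (rule DERIV_imp_deriv) (rule DERIV_const)

lemma pd_cmult_pd:
  assumes "smooth_on_set f U" "x \<in> U"
  shows "pd (\<lambda>y. c * pd f m y) i x = c * pd (pd f m) i x"
proof -
  have "((\<lambda>t. pder [m] f (x + t *\<^sub>R axis i 1)) has_real_derivative pd (pder [m] f) i x) (at 0)"
    by (rule pder_line_has_derivative_0[OF assms])
  then have "((\<lambda>t. c * pd f m (x + t *\<^sub>R axis i 1)) has_real_derivative c * pd (pd f m) i x) (at 0)"
    using DERIV_cmult by fastforce
  then show ?thesis unfolding pd_def by (rule DERIV_imp_deriv)
qed

lemma pd_cmult_component: "pd (\<lambda>q. c * q$r) j p = c * kd r j"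
proof -
  have "((\<lambda>t. c * (p$r + t * kd r j)) has_real_derivative c * kd r j) (at 0)"
    by (auto intro!: derivative_eq_intros)
  then show ?thesis unfolding pd_def vec_nth_add_axis by (rule DERIV_imp_deriv)
qed

lemma kd_mult: "kd a b * y = (if a = b then y else 0)" "y * kd a b = (if a = b then y else 0)"
  by (auto simp: kd_def)

lemma if_zero_mult:
  "(if c then a else 0) * y = (if c then a * y else (0::real))"
  "y * (if c then a else 0) = (if c then y * a else (0::real))"
  by auto

lemmas kd_sum_simps = kd_mult if_zero_mult sum.delta sum.delta' sum_subtractf

lemma sum_kd_diff:
  "(\<Sum>r\<in>UNIV. f r * (kd r j * a r - kd r m * b r)) = f j * a j - f m * (b m :: real)"
  for j m :: 4
  by (simp add: right_diff_distrib kd_sum_simps)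

lemma UNIV_4_eq_distinct:
  assumes "distinct [i, j, k, l :: 4]"
  shows "UNIV = {i, j, k, l}"
proof -
  have "card {i, j, k, l} = card (UNIV :: 4 set)" using assms by simp
  then show ?thesis by (metis card_subset_eq finite subset_UNIV)
qed

lemma deltax_Hc:
  assumes "smooth_on_set \<sigma> U" "x \<in> U"
  shows "deltax \<sigma> (\<lambda>y q. Hc \<sigma> m i j y) n x p = 4 * kd m i * kd m j * pd (pd \<sigma> m) n x"
  unfolding deltax_def Hc_def pd_const by (simp add: pd_cmult_pd[OF assms])

lemma deltax_Nc:
  assumes "smooth_on_set \<sigma> U" "x \<in> U"
  shows "deltax \<sigma> (Nc \<sigma> r i) j x p = (- 4 * p$r * kd r i) * pd (pd \<sigma> r) j x
       + 4 * pd \<sigma> j x * p$j * ((- 4 * pd \<sigma> r x * kd r i) * kd r j)"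
proof -
  have "(\<lambda>y. Nc \<sigma> r i y p) = (\<lambda>y. (- 4 * p$r * kd r i) * pd \<sigma> r y)"
    and "(\<lambda>q. Nc \<sigma> r i x q) = (\<lambda>q. (- 4 * pd \<sigma> r x * kd r i) * q$r)"
    by (auto simp: Nc_def fun_eq_iff)
  then show ?thesis unfolding deltax_def by (simp only: pd_cmult_component pd_cmult_pd[OF assms])
qed

text \<open>The vertical parts of the adapted derivatives cancel in the torsion.\<close>

lemma Rtor_eq:
  assumes "smooth_on_set \<sigma> U" "x \<in> U"
  shows "Rtor \<sigma> r j m x p = (-4 * p$r) * (kd r j * pd (pd \<sigma> r) m x - kd r m * pd (pd \<sigma> r) j x)"
  unfolding Rtor_def deltax_Nc[OF assms] by (auto simp: kd_def algebra_simps)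

lemma Ric_eq:
  fixes \<sigma> :: "real^4 \<Rightarrow> real"
  assumes U: "open U" and sm: "smooth_on_set \<sigma> U" and x: "x \<in> U"
    and p_nz: "\<And>i. p$i \<noteq> 0"
  shows "Ric \<sigma> i j x p = 4 * kd i j * pd (pd \<sigma> i) i x - 4 * pd (pd \<sigma> i) j x
     + (\<Sum>m\<in>UNIV. 4 * p$i / p$m * (Ck i m m - Ck i m j) * pd (pd \<sigma> j) m x)"
proof -
  have torsion_term: "(\<Sum>r\<in>UNIV. Cc i m r p * Rtor \<sigma> r j m x p)
        = 4 * p$i / p$m * (Ck i m m - Ck i m j) * pd (pd \<sigma> j) m x" for m
  proof -
    have "(\<Sum>r\<in>UNIV. Cc i m r p * Rtor \<sigma> r j m x p)
       = (\<Sum>r\<in>UNIV. (Cc i m r p * (-4 * p$r)) * (kd r j * pd (pd \<sigma> r) m x - kd r m * pd (pd \<sigma> r) j x))"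
      unfolding Rtor_eq[OF sm x] by (simp add: mult.assoc)
    also have "\<dots> = Cc i m j p * (-4 * p$j) * pd (pd \<sigma> j) m x - Cc i m m p * (-4 * p$m) * pd (pd \<sigma> m) j x"
      by (rule sum_kd_diff)
    also have "\<dots> = 4 * p$i / p$m * (Ck i m m - Ck i m j) * pd (pd \<sigma> j) m x"
      using p_nz[of m] p_nz[of j] pd_pd_commute[OF U sm x, of m j] by (simp add: Cc_def field_simps)
    finally show ?thesis .
  qed
  have "(\<Sum>r\<in>UNIV. \<Sum>m\<in>UNIV. Hc \<sigma> r i j x * Hc \<sigma> m r m x - Hc \<sigma> r i m x * Hc \<sigma> m r j x) = 0"
    unfolding Hc_def by (simp add: kd_sum_simps mult.assoc)
  then show ?thesis
    unfolding Ric_def deltax_Hc[OF sm x] torsion_term by (simp add: kd_sum_simps mult.assoc kd_def)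
qed

lemma Ric_diagonal:
  assumes "open U" "smooth_on_set \<sigma> U" "x \<in> U" "\<And>i. p$i \<noteq> 0"
  shows "Ric \<sigma> i i x p = 0"
proof -
  have "Ck i m m - Ck i m i = 0" for m by (auto simp: Ck_def kd_def)
  then show ?thesis unfolding Ric_eq[OF assms] by (simp add: kd_def)
qed

lemma Ric_off_diagonal:
  assumes U: "open U" and sm: "smooth_on_set \<sigma> U" and x: "x \<in> U" and p_nz: "\<And>i. p$i \<noteq> 0"
    and d: "distinct [i, j, k, l]"
  shows "Ric \<sigma> i j x p = - 2 * pd (pd \<sigma> j) i x - p$i / p$k * pd (pd \<sigma> k) j x
                         - p$i / p$l * pd (pd \<sigma> l) j x"
proof -
  have ne: "i \<noteq> j" "i \<noteq> k" "i \<noteq> l" "j \<noteq> k" "j \<noteq> l" "k \<noteq> l"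
    using d by auto
  have sum_eq: "(\<Sum>m\<in>{i,j,k,l}. g m) = g i + g j + g k + g l" for g :: "4 \<Rightarrow> real"
    using ne by (simp add: algebra_simps)
  have Ck_diff: "Ck i m m - Ck i m j = (-2 + 6 * kd m i + 2 * kd m j) / 8" for m
    using ne by (auto simp: Ck_def kd_def)
  have kd_vals: "kd i i = 1" "kd j j = 1" "kd i j = 0" "kd j i = 0" "kd k i = 0" "kd k j = 0"
      "kd l i = 0" "kd l j = 0"
    using ne by (auto simp: kd_def)
  show ?thesis
    unfolding Ric_eq[OF U sm x p_nz] UNIV_4_eq_distinct[OF d] sum_eq Ck_diff kd_vals
    using p_nz[of i] p_nz[of k] p_nz[of l] pd_pd_commute[OF U sm x]
    by (simp add: field_simps)
qed

lemma pd_Cc: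
  assumes "p$b \<noteq> 0" "p$c \<noteq> 0"
  shows "pd (Cc a b c) m p
    = Ck a b c * (kd a m * p$b * p$c - p$a * (kd b m * p$c + p$b * kd c m)) / (p$b * p$c)^2"
proof -
  have "((\<lambda>t. Ck a b c * (p$a + t * kd a m) / ((p$b + t * kd b m) * (p$c + t * kd c m)))
      has_real_derivative
        Ck a b c * (kd a m * p$b * p$c - p$a * (kd b m * p$c + p$b * kd c m)) / (p$b * p$c)^2) (at 0)"
    by (auto intro!: derivative_eq_intros simp: assms power2_eq_square algebra_simps)
  then show ?thesis unfolding pd_def Cc_def vec_nth_add_axis by (rule DERIV_imp_deriv)
qed

lemma minus_Sv_eq:
  assumes p_nz: "\<And>i. p$i \<noteq> 0"
  shows "- Sv i j p = (4 * kd i j - 1) / 8 * (1 / (p$i * p$j))"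
  using exhaust_4[of i] exhaust_4[of j] p_nz[of 1] p_nz[of 2] p_nz[of 3] p_nz[of 4]
  by (elim disjE)
    (simp_all add: Sv_def pd_Cc p_nz sum_4 Cc_def Ck_def kd_def field_simps power2_eq_square)

theorem mainTheorem3:
  fixes \<sigma> :: "real^4 \<Rightarrow> real" and U :: "(real^4) set"
    and h :: "real \<Rightarrow> real"
  assumes "open U"
    and "smooth_on_set \<sigma> U"
    and "\<not> (\<exists>c. \<forall>x\<in>U. \<sigma> x = c)"
    and "\<forall>t. h t > 0"
    and "x \<in> U"
    and "p$1 * p$2 * p$3 * p$4 > 0"
  shows "(\<forall>i. Ric \<sigma> i i x p = 0)
       \<and> (\<forall>i j k l. distinct [i, j, k, l] \<longrightarrow>
            Ric \<sigma> i j x p = - 2 * pd (pd \<sigma> j) i x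
                             - p$i / p$k * pd (pd \<sigma> k) j x
                             - p$i / p$l * pd (pd \<sigma> l) j x)
       \<and> (\<forall>i j. Rv i j p = - Sv i j p
               \<and> - Sv i j p = (4 * kd i j - 1) / 8 * (1 / (p$i * p$j)))"
proof -
  have p_nz: "p$i \<noteq> 0" for i :: 4
    using exhaust_4[of i] assms(6) by auto
  show ?thesis
    using Ric_diagonal[OF assms(1,2,5) p_nz] Ric_off_diagonal[OF assms(1,2,5) p_nz]
      minus_Sv_eq[OF p_nz]
    by (simp add: Rv_def)
qed

end
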